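(* $2^{\omega}\in I_0^{*}$; that is, $2^\omega$ is the union of countably many sets $A\subseteq 2^\omega$ each of which has the property that there is a nonempty perfect set $P\subseteq 2^\omega$ such that the sets $A\oplus x$, $x\in P$, are pairwise disjoint.
   Context: $2^\omega$ is the Cantor group with coordinatewise addition modulo 2, denoted $\oplus$; $A\oplus x=\{a\oplus x:a\in A\}$. $I_0^*$ is the $\sigma$-ideal on $2^\omega$ generated by all (not necessarily Borel) sets $A\subseteq 2^\omega$ for which there is a nonempty perfect $P\subseteq 2^\omega$ with $\{A\oplus x:x\in P\}$ pairwise disjoint. *)

theory Defs
  imports "HOL-Analysis.Analysis"
begin

text \<open>Cantor space 2^omega is the type nat \<Rightarrow> bool, carrying the product topology
  (from HOL-Analysis Function_Topology) of the discrete topology on bool.\<close>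

type_synonym cantor = "nat \<Rightarrow> bool"

definition cantor_add :: "cantor \<Rightarrow> cantor \<Rightarrow> cantor"  (infixl "\<oplus>\<^sub>c" 65) where
  "x \<oplus>\<^sub>c y = (\<lambda>n. x n \<noteq> y n)"

definition translate :: "cantor set \<Rightarrow> cantor \<Rightarrow> cantor set" where
  "translate A x = (\<lambda>a. a \<oplus>\<^sub>c x) ` A"

definition perfect_set :: "cantor set \<Rightarrow> bool" where
  "perfect_set P \<longleftrightarrow> closed P \<and> (\<forall>x\<in>P. x islimpt P)"

definition I0_gen :: "cantor set \<Rightarrow> bool" where
  "I0_gen A \<longleftrightarrow> (\<exists>P. P \<noteq> {} \<and> perfect_set P \<and>
      (\<forall>x\<in>P. \<forall>y\<in>P. x \<noteq> y \<longrightarrow> translate A x \<inter> translate A y = {}))"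

definition I0_star :: "cantor set set" where
  "I0_star = {B. \<exists>F. countable F \<and> (\<forall>A\<in>F. I0_gen A) \<and> B \<subseteq> \<Union>F}"

end

theory Submission
  imports Defs
begin

text \<open>Split \<omega> into infinitely many infinite blocks and call y, z equivalent when they differ
  on only finitely many blocks; fix a representative of every class. Each y agrees with its
  representative on some block i, i.e. lies in the set A_i of such points. Let P_i be the
  perfect set of sequences vanishing off block i. If a \<oplus> x = b \<oplus> x' with a, b \<in> A_i and
  x, x' \<in> P_i, then a and b differ only on block i, so they share their representative and
  hence agree on block i too; thus a = b and x = x'.\<close>

lemma open_fun_contains_cylinder:
  fixes T :: "('a \<Rightarrow> 'b::topological_space) set"
  assumes "open T" "x \<in> T"
  obtains F where "finite F" "\<And>y. (\<forall>j\<in>F. y j = x j) \<Longrightarrow> y \<in> T"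
proof -
  obtain X where X: "x \<in> (\<Pi>\<^sub>E j\<in>UNIV. X j)" "finite {j. X j \<noteq> UNIV}" "(\<Pi>\<^sub>E j\<in>UNIV. X j) \<subseteq> T"
    using product_topology_open_contains_basis[of "\<lambda>_. euclidean" UNIV T x] assms
    unfolding open_fun_def by auto
  have "y \<in> T" if "\<forall>j\<in>{j. X j \<noteq> UNIV}. y j = x j" for y
  proof -
    have "y j \<in> X j" for j
      using that X(1) by (cases "X j = UNIV") auto
    then show ?thesis
      using X(3) by (auto simp: PiE_iff)
  qed
  then show thesis
    using that X(2) by blast
qed

definition supported_on :: "nat set \<Rightarrow> cantor set" where
  "supported_on S = {x. \<forall>n. n \<notin> S \<longrightarrow> \<not> x n}"

lemma closed_supported_on: "closed (supported_on S)"
proof -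
  have "supported_on S = (\<Inter>n\<in>-S. {x. x n = False})"
    unfolding supported_on_def by auto
  moreover have "closed {x::cantor. x n = False}" for n
    by (intro closed_Collect_eq continuous_on_product_coordinates continuous_on_const)
  ultimately show ?thesis
    by auto
qed

lemma islimpt_supported_on:
  assumes "infinite S" "x \<in> supported_on S"
  shows "x islimpt supported_on S"
  unfolding islimpt_def
proof (intro allI impI)
  fix T :: "cantor set"
  assume "x \<in> T" "open T"
  then obtain F where "finite F" and F: "\<And>y. (\<forall>j\<in>F. y j = x j) \<Longrightarrow> y \<in> T"
    using open_fun_contains_cylinder by blast
  then have "infinite (S - F)"
    using assms(1) Diff_infinite_finite by blast
  then obtain n where "n \<in> S" "n \<notin> F"
    using infinite_imp_nonempty by blast
  define y where "y = x(n := \<not> x n)"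
  have "y \<in> T"
    using \<open>n \<notin> F\<close> unfolding y_def by (intro F) auto
  moreover have "y \<in> supported_on S"
    using assms(2) \<open>n \<in> S\<close> unfolding y_def supported_on_def by auto
  moreover have "y \<noteq> x"
    unfolding y_def by (metis fun_upd_same)
  ultimately show "\<exists>y\<in>supported_on S. y \<in> T \<and> y \<noteq> x"
    by blast
qed

lemma perfect_set_supported_on: "infinite S \<Longrightarrow> perfect_set (supported_on S)"
  unfolding perfect_set_def using closed_supported_on islimpt_supported_on by blast

definition block_of :: "nat \<Rightarrow> nat" where
  "block_of n = fst (prod_decode n)"

lemma infinite_block: "infinite {n. block_of n = i}"
proof -
  have "range (\<lambda>m. prod_encode (i, m)) \<subseteq> {n. block_of n = i}"
    unfolding block_of_def by auto
  moreover have "inj (\<lambda>m. prod_encode (i, m))"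
    by (auto intro: injI dest: inj_prod_encode[THEN injD])
  ultimately show ?thesis
    using infinite_super range_inj_infinite by blast
qed

definition block_equiv :: "cantor \<Rightarrow> cantor \<Rightarrow> bool" where
  "block_equiv y z \<longleftrightarrow> finite (block_of ` {n. y n \<noteq> z n})"

lemma block_equiv_sym:
  assumes "block_equiv y z"
  shows "block_equiv z y"
proof -
  have "{n. z n \<noteq> y n} = {n. y n \<noteq> z n}"
    by auto
  then show ?thesis
    using assms unfolding block_equiv_def by simp
qed

lemma block_equiv_trans:
  assumes "block_equiv x y" "block_equiv y z"
  shows "block_equiv x z"
proof -
  have "block_of ` {n. x n \<noteq> z n} \<subseteq> block_of ` {n. x n \<noteq> y n} \<union> block_of ` {n. y n \<noteq> z n}"
    by auto
  then show ?thesis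
    using assms unfolding block_equiv_def by (meson finite_Un finite_subset)
qed

definition block_rep :: "cantor \<Rightarrow> cantor" where
  "block_rep y = (SOME w. block_equiv w y)"

lemma block_equiv_rep: "block_equiv (block_rep y) y"
  unfolding block_rep_def by (rule someI[of _ y]) (simp add: block_equiv_def)

lemma block_rep_cong:
  assumes "block_equiv y z"
  shows "block_rep y = block_rep z"
proof -
  have "(\<lambda>w. block_equiv w y) = (\<lambda>w. block_equiv w z)"
    using assms block_equiv_sym block_equiv_trans by blast
  then show ?thesis
    unfolding block_rep_def by simp
qed

definition rep_agree :: "nat \<Rightarrow> cantor set" where
  "rep_agree i = {y. \<forall>n. block_of n = i \<longrightarrow> y n = block_rep y n}"

lemma UN_rep_agree: "(\<Union>i. rep_agree i) = UNIV"
proof -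
  have "y \<in> (\<Union>i. rep_agree i)" for y
  proof -
    have "finite (block_of ` {n. block_rep y n \<noteq> y n})"
      using block_equiv_rep unfolding block_equiv_def .
    then obtain i where "i \<notin> block_of ` {n. block_rep y n \<noteq> y n}"
      using ex_new_if_finite infinite_UNIV_nat by blast
    then have "y \<in> rep_agree i"
      unfolding rep_agree_def by auto
    then show ?thesis
      by blast
  qed
  then show ?thesis
    by blast
qed

lemma rep_agree_translates_disjoint:
  assumes "x \<in> supported_on {n. block_of n = i}" "x' \<in> supported_on {n. block_of n = i}"
    and "x \<noteq> x'"
  shows "translate (rep_agree i) x \<inter> translate (rep_agree i) x' = {}"
proof (rule ccontr)
  assume "translate (rep_agree i) x \<inter> translate (rep_agree i) x' \<noteq> {}"
  then obtain a b where a: "a \<in> rep_agree i" and b: "b \<in> rep_agree i"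
    and sum: "a \<oplus>\<^sub>c x = b \<oplus>\<^sub>c x'"
    unfolding translate_def by auto
  have sum_eq: "(a n \<noteq> x n) = (b n \<noteq> x' n)" for n
    using fun_cong[OF sum, of n] by (simp add: cantor_add_def)
  have off_block: "a n = b n" if "block_of n \<noteq> i" for n
    using assms(1,2) sum_eq[of n] that unfolding supported_on_def by auto
  then have "block_of ` {n. a n \<noteq> b n} \<subseteq> {i}"
    by auto
  then have "block_rep a = block_rep b"
    by (intro block_rep_cong) (auto simp: block_equiv_def intro: finite_subset)
  then have "a n = b n" for n
    using a b off_block unfolding rep_agree_def by (cases "block_of n = i") auto
  then have "x = x'"
    using sum_eq by auto
  then show False
    using assms(3) by blast
qed

lemma I0_gen_rep_agree: "I0_gen (rep_agree i)"
  unfolding I0_gen_def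
proof (intro exI conjI)
  show "supported_on {n. block_of n = i} \<noteq> {}"
    unfolding supported_on_def by auto
  show "perfect_set (supported_on {n. block_of n = i})"
    using perfect_set_supported_on infinite_block by blast
qed (use rep_agree_translates_disjoint in blast)

theorem theorem3p1:
  shows "(UNIV :: cantor set) \<in> I0_star"
  unfolding I0_star_def
proof (intro CollectI exI conjI)
  show "countable (range rep_agree)"
    by simp
  show "\<forall>A\<in>range rep_agree. I0_gen A"
    using I0_gen_rep_agree by blast
  show "UNIV \<subseteq> \<Union>(range rep_agree)"
    using UN_rep_agree by blast
qed

end
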